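(* Let $L\subseteq\{a,b\}^*$ be the set of words whose last maximal block of the form $a^+b^*$ contains at least as many $a$'s as $b$'s; precisely, $L$ consists of the empty word together with all words $u\,a^nb^m$ where $u\in\{\varepsilon\}\cup\{a,b\}^*b$, $n\ge 1$ and $0\le m\le n$. Then $L\in\mathrm{CN}_1$ and $L\notin\mathrm{CH}$, i.e. $L$ is recognised by some (nondeterministic) $1$-VASS under coverability acceptance but by no history-deterministic $k$-VASS (for any $k$) under coverability acceptance.
   Context: Fix a finite alphabet $\Sigma$. A $k$-dimensional vector addition system with states ($k$-VASS) is a tuple $(Q,q_0,F,\delta)$ where $Q$ is a finite set of states, $q_0\in Q$ is initial, $F\subseteq Q$ is the set of accepting states, and $\delta\subseteq Q\times\Sigma\times\mathbb{Z}^k\times Q$ is a finite set of transitions (no $\varepsilon$-transitions). A run on a word $w=a_1\cdots a_n$ is a sequence of transitions $(p_{i-1},a_i,d_i,p_i)$ with $p_0=q_0$ such that the counter vectors $v_0=\vec 0$, $v_i=v_{i-1}+d_i$ all lie in $\mathbb{N}^k$. Under coverability acceptance the run is accepting if $p_n\in F$. The language is the set of words having an accepting run. A VASS is history-deterministic if there is a resolver, i.e. a function $r$ mapping each finite sequence of transitions and each letter $a$ to a transition labelled $a$, such that for every word $w$ in the language, the sequence of transitions obtained by successively applying $r$ to the letters of $w$ is a run on $w$ (counters stay nonnegative) and is accepting. $\mathrm{CN}_k$ (resp. $\mathrm{CH}_k$) is the class of languages recognised by arbitrary (resp. history-deterministic) $k$-VASS under coverability acceptance, and $\mathrm{CH}=\bigcup_{k\ge1}\mathrm{CH}_k$.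 *)

theory Defs
  imports Main
begin

type_synonym 'a trans = "nat \<times> 'a \<times> int list \<times> nat"

record 'a vass =
  states :: "nat set"
  init   :: nat
  final  :: "nat set"
  delta  :: "'a trans set"

definition is_vass :: "nat \<Rightarrow> 'a vass \<Rightarrow> bool" where
  "is_vass k V \<longleftrightarrow> finite (states V) \<and> init V \<in> states V \<and> final V \<subseteq> states V
     \<and> finite (delta V)
     \<and> (\<forall>(p, a, d, q) \<in> delta V. p \<in> states V \<and> q \<in> states V \<and> length d = k)"

definition src :: "'a trans \<Rightarrow> nat" where "src t = fst t"
definition lbl :: "'a trans \<Rightarrow> 'a" where "lbl t = fst (snd t)"
definition eff :: "'a trans \<Rightarrow> int list" where "eff t = fst (snd (snd t))"
definition tgt :: "'a trans \<Rightarrow> nat" where "tgt t = snd (snd (snd t))"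

definition counters :: "nat \<Rightarrow> 'a trans list \<Rightarrow> int list" where
  "counters k ts = foldl (\<lambda>v t. map2 (+) v (eff t)) (replicate k 0) ts"

definition last_state :: "'a vass \<Rightarrow> 'a trans list \<Rightarrow> nat" where
  "last_state V ts = (if ts = [] then init V else tgt (last ts))"

definition is_run :: "nat \<Rightarrow> 'a vass \<Rightarrow> 'a list \<Rightarrow> 'a trans list \<Rightarrow> bool" where
  "is_run k V w ts \<longleftrightarrow> length ts = length w
     \<and> (\<forall>i < length ts. ts ! i \<in> delta V \<and> lbl (ts ! i) = w ! i
            \<and> src (ts ! i) = last_state V (take i ts))
     \<and> (\<forall>i \<le> length ts. \<forall>x \<in> set (counters k (take i ts)). x \<ge> 0)"

definition accepting_run :: "nat \<Rightarrow> 'a vass \<Rightarrow> 'a list \<Rightarrow> 'a trans list \<Rightarrow> bool" where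
  "accepting_run k V w ts \<longleftrightarrow> is_run k V w ts \<and> last_state V ts \<in> final V"

definition lang :: "nat \<Rightarrow> 'a vass \<Rightarrow> 'a list set" where
  "lang k V = {w. \<exists>ts. accepting_run k V w ts}"

fun resolve :: "('a trans list \<Rightarrow> 'a \<Rightarrow> 'a trans) \<Rightarrow> 'a trans list \<Rightarrow> 'a list \<Rightarrow> 'a trans list" where
  "resolve r h [] = h"
| "resolve r h (a # w) = resolve r (h @ [r h a]) w"

definition is_resolver :: "nat \<Rightarrow> 'a vass \<Rightarrow> ('a trans list \<Rightarrow> 'a \<Rightarrow> 'a trans) \<Rightarrow> bool" where
  "is_resolver k V r \<longleftrightarrow>
     (\<forall>h a. r h a \<in> delta V \<and> lbl (r h a) = a)
     \<and> (\<forall>w \<in> lang k V. accepting_run k V w (resolve r [] w))"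

definition history_deterministic :: "nat \<Rightarrow> 'a vass \<Rightarrow> bool" where
  "history_deterministic k V \<longleftrightarrow> (\<exists>r. is_resolver k V r)"

definition CN :: "nat \<Rightarrow> 'a list set set" where
  "CN k = {L. \<exists>V. is_vass k V \<and> lang k V = L}"

definition CH_k :: "nat \<Rightarrow> 'a list set set" where
  "CH_k k = {L. \<exists>V. is_vass k V \<and> history_deterministic k V \<and> lang k V = L}"

definition CH :: "'a list set set" where
  "CH = (\<Union>k \<in> {1..}. CH_k k)"

datatype ab = A | B

definition Lab :: "ab list set" where
  "Lab = {[]} \<union> {u @ replicate n A @ replicate m B | u n m.
                   (u = [] \<or> (u \<noteq> [] \<and> last u = B)) \<and> n \<ge> 1 \<and> m \<le> n}"

end

theory Submission
  imports Defs "HOL-Library.Infinite_Set" "HOL-Library.FuncSet"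
begin

text \<open>Membership in CN 1: a 1-VASS guesses where the last A-block starts, counts its letters
up and the following B's down, and accepts as long as the counter stays nonnegative.

Non-membership in CH: a resolver of a k-VASS for Lab assigns to every word w a state st w and
counters cv w; its run on every word is a genuine run, because every word extends to one in
Lab. Counters change by a bounded amount per letter, and by monotonicity of VASS a word whose
configuration dominates that of w (same state, pointwise larger counters) accepts every
continuation accepted after w. As w B^m is in Lab iff the last A-block of w has length at least
m, a word ending in a longer A-block is never dominated by one ending in a shorter A-block.

Call a set \<Omega> of counters pumpable if for every block length n some state and some values of
the counters outside \<Omega> are reached by words ending in an A-block of length n whose counters in
\<Omega> are arbitrarily large. The empty set is pumpable. For pumpable \<Omega>, pass to infinitely many
block lengths sharing the state such that each counter outside \<Omega> is either constant or tends
to infinity along them. By the domination argument not all of them are constant, and those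
tending to infinity can be added to \<Omega>, because appending B A^n moves every counter by a
bounded amount only. Hence there are pumpable sets of every size, which is absurd with k
counters.\<close>

section \<open>Runs of vector addition systems\<close>

lemma trans_sel [simp]:
  "src (p, a, d, q) = p" "lbl (p, a, d, q) = a" "eff (p, a, d, q) = d" "tgt (p, a, d, q) = q"
  by (simp_all add: src_def lbl_def eff_def tgt_def)

lemma length_eff: "is_vass k V \<Longrightarrow> t \<in> delta V \<Longrightarrow> length (eff t) = k"
  unfolding is_vass_def by (cases t) auto

lemma tgt_in_states: "is_vass k V \<Longrightarrow> t \<in> delta V \<Longrightarrow> tgt t \<in> states V"
  unfolding is_vass_def by (cases t) auto

lemma last_state_append:
  "last_state V (xs @ ys) = (if ys = [] then last_state V xs else last_state V ys)"
  by (simp add: last_state_def)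

lemma last_state_Nil [simp]: "last_state V [] = init V"
  by (simp add: last_state_def)

lemma last_state_snoc [simp]: "last_state V (ts @ [t]) = tgt t"
  by (simp add: last_state_def)

lemma last_state_in_states:
  assumes "is_vass k V" "set ts \<subseteq> delta V"
  shows "last_state V ts \<in> states V"
proof (cases "ts = []")
  case False
  then have "last ts \<in> delta V" using assms(2) last_in_set by blast
  then show ?thesis using tgt_in_states[OF assms(1)] False by (simp add: last_state_def)
qed (use assms(1) in \<open>simp add: last_state_def is_vass_def\<close>)

definition total_eff :: "'a trans list \<Rightarrow> nat \<Rightarrow> int" where
  "total_eff ts i = (\<Sum>t\<leftarrow>ts. eff t ! i)"

lemma total_eff_Nil [simp]: "total_eff [] i = 0"
  by (simp add: total_eff_def)

lemma total_eff_append [simp]: "total_eff (xs @ ys) i = total_eff xs i + total_eff ys i"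
  by (simp add: total_eff_def)

lemma total_eff_single [simp]: "total_eff [t] i = eff t ! i"
  by (simp add: total_eff_def)

lemma abs_total_eff_le:
  "(\<And>t. t \<in> set ts \<Longrightarrow> \<bar>eff t ! i\<bar> \<le> D) \<Longrightarrow> \<bar>total_eff ts i\<bar> \<le> D * int (length ts)"
proof (induction ts)
  case (Cons t ts)
  have "\<bar>total_eff (t # ts) i\<bar> \<le> \<bar>eff t ! i\<bar> + \<bar>total_eff ts i\<bar>"
    using total_eff_append[of "[t]" ts i] by simp
  moreover have "\<bar>eff t ! i\<bar> \<le> D" and "\<bar>total_eff ts i\<bar> \<le> D * int (length ts)"
    using Cons by simp_all
  ultimately have "\<bar>total_eff (t # ts) i\<bar> \<le> D + D * int (length ts)" by linarith
  then show ?case by (simp add: algebra_simps)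
qed simp

lemma counters_eq_total_eff:
  "(\<And>t. t \<in> set ts \<Longrightarrow> length (eff t) = k) \<Longrightarrow> counters k ts = map (total_eff ts) [0..<k]"
proof (induction ts rule: rev_induct)
  case Nil
  then show ?case by (simp add: counters_def map_replicate_const)
next
  case (snoc t ts)
  then show ?case by (intro nth_equalityI) (auto simp: counters_def)
qed

lemma counters_nonneg_iff:
  assumes "is_vass k V" "set ts \<subseteq> delta V"
  shows "(\<forall>x \<in> set (counters k ts). 0 \<le> x) \<longleftrightarrow> (\<forall>i < k. 0 \<le> total_eff ts i)"
proof -
  have "counters k ts = map (total_eff ts) [0..<k]"
    using counters_eq_total_eff length_eff[OF assms(1)] assms(2) by blast
  then show ?thesis by auto
qed

lemma is_run_Nil [simp]: "is_run k V [] []"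
  by (simp add: is_run_def counters_def)

lemma is_run_length: "is_run k V w ts \<Longrightarrow> length ts = length w"
  by (simp add: is_run_def)

lemma set_run_subset_delta: "is_run k V w ts \<Longrightarrow> set ts \<subseteq> delta V"
  unfolding is_run_def by (metis in_set_conv_nth subsetI)

lemma run_total_eff_nonneg:
  assumes "is_vass k V" "is_run k V w ts" "i < k"
  shows "0 \<le> total_eff ts i"
proof -
  have "\<forall>x \<in> set (counters k ts). 0 \<le> x"
    using assms(2) unfolding is_run_def by (metis order_refl take_all)
  then show ?thesis
    using counters_nonneg_iff[OF assms(1) set_run_subset_delta[OF assms(2)]] assms(3) by blast
qed

lemma is_run_snoc:
  "is_run k V (w @ [a]) (ts @ [t]) \<longleftrightarrow> is_run k V w ts \<and> t \<in> delta V \<and> lbl t = a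
     \<and> src t = last_state V ts \<and> (\<forall>x \<in> set (counters k (ts @ [t])). 0 \<le> x)"
proof (cases "length ts = length w")
  case True
  have "(\<forall>i \<le> Suc n. P i) \<longleftrightarrow> (\<forall>i \<le> n. P i) \<and> P (Suc n)" for n and P :: "nat \<Rightarrow> bool"
    using le_Suc_eq by auto
  then show ?thesis
    using True unfolding is_run_def by (auto simp: nth_append All_less_Suc)
qed (auto simp: is_run_def)

lemma is_run_snoc_vass:
  assumes "is_vass k V"
  shows "is_run k V (w @ [a]) (ts @ [t]) \<longleftrightarrow> is_run k V w ts \<and> t \<in> delta V \<and> lbl t = a
     \<and> src t = last_state V ts \<and> (\<forall>i < k. 0 \<le> total_eff ts i + eff t ! i)"
  using counters_nonneg_iff[OF assms, of "ts @ [t]"] set_run_subset_delta[of k V w ts]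
  unfolding is_run_snoc by auto

lemma is_run_prefix:
  "is_run k V (w @ u) (xs @ ys) \<Longrightarrow> length xs = length w \<Longrightarrow> is_run k V w xs"
proof (induction u arbitrary: ys rule: rev_induct)
  case Nil
  then show ?case using is_run_length by fastforce
next
  case (snoc a u)
  then obtain ys' t where "ys = ys' @ [t]"
    using is_run_length[OF snoc.prems(1)] by (cases ys rule: rev_cases) auto
  then show ?case using snoc by (metis append_assoc is_run_snoc)
qed

text \<open>Counters only occur in the nonnegativity constraints, so a run stays a run when its
prefix is replaced by one reaching the same state with pointwise larger counters.\<close>
lemma is_run_mono:
  assumes V: "is_vass k V" and run': "is_run k V w' xs'" and len: "length xs = length w"
    and same_state: "last_state V xs' = last_state V xs"
    and larger: "\<forall>i < k. total_eff xs i \<le> total_eff xs' i"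
  shows "is_run k V (w @ u) (xs @ ys) \<Longrightarrow> is_run k V (w' @ u) (xs' @ ys)"
proof (induction u arbitrary: ys rule: rev_induct)
  case Nil
  then show ?case using is_run_length len run' by fastforce
next
  case (snoc a u)
  then obtain ys' t where ys: "ys = ys' @ [t]"
    using is_run_length[OF snoc.prems] len by (cases ys rule: rev_cases) auto
  have "is_run k V ((w @ u) @ [a]) ((xs @ ys') @ [t])"
    using snoc.prems ys by simp
  then have "is_run k V ((w' @ u) @ [a]) ((xs' @ ys') @ [t])"
    using snoc.IH larger same_state unfolding is_run_snoc_vass[OF V]
    by (fastforce simp: last_state_append)
  then show ?case using ys by simp
qed

lemma accepting_run_mono:
  assumes "is_vass k V" "is_run k V w' xs'" "length xs = length w"
    "last_state V xs' = last_state V xs" "\<forall>i < k. total_eff xs i \<le> total_eff xs' i"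
    "accepting_run k V (w @ u) (xs @ ys)"
  shows "accepting_run k V (w' @ u) (xs' @ ys)"
  using is_run_mono[OF assms(1-5), of u ys] assms(4,6) unfolding accepting_run_def
  by (cases "ys = []") (auto simp: last_state_append)

lemma resolve_append: "resolve r h (w @ u) = resolve r (resolve r h w) u"
  by (induction w arbitrary: h) auto

lemma length_resolve [simp]: "length (resolve r h u) = length h + length u"
  by (induction u arbitrary: h) auto

lemma resolve_eq_append:
  assumes "\<And>h a. r h a \<in> T"
  obtains ys where "resolve r h u = h @ ys" "length ys = length u" "set ys \<subseteq> T"
proof (induction u arbitrary: h)
  case Nil
  then show ?case by simp
next
  case (Cons a u)
  show ?case
  proof (rule Cons.IH)
    fix ys assume "resolve r (h @ [r h a]) u = (h @ [r h a]) @ ys" "length ys = length u" "set ys \<subseteq> T"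
    then show thesis using Cons.prems[of "r h a # ys"] assms by simp
  qed
qed

lemma resolver_run:
  assumes "is_resolver k V r" "w @ u \<in> lang k V"
  shows "is_run k V w (resolve r [] w)"
proof -
  obtain ys where ys: "resolve r (resolve r [] w) u = resolve r [] w @ ys"
    using resolve_eq_append[of r UNIV] by blast
  have "is_run k V (w @ u) (resolve r [] w @ ys)"
    using assms ys resolve_append[of r "[]" w u] unfolding is_resolver_def accepting_run_def by metis
  moreover have "length (resolve r [] w) = length w" by simp
  ultimately show ?thesis by (rule is_run_prefix)
qed

definition eff_bound :: "nat \<Rightarrow> 'a vass \<Rightarrow> int" where
  "eff_bound k V = (\<Sum>t \<in> delta V. \<Sum>i<k. \<bar>eff t ! i\<bar>)"

lemma abs_eff_le_eff_bound:
  assumes "is_vass k V" "t \<in> delta V" "i < k"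
  shows "\<bar>eff t ! i\<bar> \<le> eff_bound k V"
proof -
  have "\<bar>eff t ! i\<bar> \<le> (\<Sum>i<k. \<bar>eff t ! i\<bar>)"
    using member_le_sum[of i "{..<k}" "\<lambda>i. \<bar>eff t ! i\<bar>"] assms(3) by simp
  also have "\<dots> \<le> eff_bound k V"
    unfolding eff_bound_def using assms(1,2)
    by (intro member_le_sum) (auto simp: is_vass_def intro: sum_nonneg)
  finally show ?thesis .
qed

lemma total_eff_resolve_append_le:
  assumes "is_vass k V" "\<And>h a. r h a \<in> delta V" "i < k"
  shows "\<bar>total_eff (resolve r h (w @ u)) i - total_eff (resolve r h w) i\<bar>
    \<le> eff_bound k V * int (length u)"
proof -
  obtain ys where ys: "resolve r (resolve r h w) u = resolve r h w @ ys"
    "length ys = length u" "set ys \<subseteq> delta V"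
    using resolve_eq_append[of r "delta V"] assms(2) by blast
  have "\<bar>total_eff ys i\<bar> \<le> eff_bound k V * int (length ys)"
    using abs_eff_le_eff_bound[OF assms(1) _ assms(3)] ys(3) by (intro abs_total_eff_le) blast
  then show ?thesis using ys(1,2) by (simp add: resolve_append)
qed

text \<open>The resolver reads its input online, so its accepting run on w @ u is its run on w
followed by some ys; by monotonicity, ys can follow the run on w' as well.\<close>
lemma resolver_lang_transfer:
  assumes "is_vass k V" "is_resolver k V r" "is_run k V w' (resolve r [] w')"
    "last_state V (resolve r [] w) = last_state V (resolve r [] w')"
    "\<forall>i < k. total_eff (resolve r [] w) i \<le> total_eff (resolve r [] w') i"
    "w @ u \<in> lang k V"
  shows "w' @ u \<in> lang k V"
proof -
  obtain ys where "resolve r (resolve r [] w) u = resolve r [] w @ ys"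
    using resolve_eq_append[of r UNIV] by blast
  then have "resolve r [] (w @ u) = resolve r [] w @ ys" by (simp add: resolve_append)
  then have acc: "accepting_run k V (w @ u) (resolve r [] w @ ys)"
    using assms(2,6) unfolding is_resolver_def by metis
  have "accepting_run k V (w' @ u) (resolve r [] w' @ ys)"
    by (rule accepting_run_mono[OF assms(1,3) _ _ _ acc]) (use assms(4,5) in simp_all)
  then show ?thesis unfolding lang_def by blast
qed

section \<open>Words ending in an A-block\<close>

definition ends_with_A_block :: "nat \<Rightarrow> ab list \<Rightarrow> bool" where
  "ends_with_A_block n w \<longleftrightarrow> (\<exists>x. w = x @ replicate n A \<and> (x = [] \<or> last x = B))"

lemma ends_with_A_block_exists: "\<exists>n. ends_with_A_block n w"
proof (induction w rule: rev_induct)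
  case Nil
  show ?case by (auto simp: ends_with_A_block_def)
next
  case (snoc c w)
  then obtain n x where "w = x @ replicate n A" "x = [] \<or> last x = B"
    unfolding ends_with_A_block_def by blast
  then show ?case
    unfolding ends_with_A_block_def
    by (cases c) (metis replicate_Suc replicate_append_same append_assoc, force)
qed

lemma ends_with_A_block_extend: "ends_with_A_block n (w @ B # replicate n A)"
  unfolding ends_with_A_block_def by (rule exI[of _ "w @ [B]"]) simp

lemma ends_with_A_block_replicate: "ends_with_A_block n (replicate n A)"
  unfolding ends_with_A_block_def by simp

lemma A_B_block_lengths:
  fixes m n :: nat
  assumes "x = [] \<or> last x = B" "1 \<le> n"
  defines "r \<equiv> rev (x @ replicate n A @ replicate m B)"
  shows "length (takeWhile (\<lambda>c. c = B) r) = m"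
    and "length (takeWhile (\<lambda>c. c = A) (drop m r)) = n"
proof -
  obtain n' where n: "n = Suc n'" using assms(2) by (cases n) auto
  have r: "r = replicate m B @ replicate n A @ rev x" unfolding r_def by simp
  show "length (takeWhile (\<lambda>c. c = B) r) = m"
    unfolding r n by (subst takeWhile_append2) auto
  have "rev x = [] \<or> hd (rev x) = B" using assms(1) by (auto simp: hd_rev)
  then have "takeWhile (\<lambda>c. c = A) (rev x) = []" by (cases "rev x") auto
  moreover have "takeWhile (\<lambda>c. c = A) (replicate n A @ rev x)
      = replicate n A @ takeWhile (\<lambda>c. c = A) (rev x)"
    by (rule takeWhile_append2) auto
  ultimately show "length (takeWhile (\<lambda>c. c = A) (drop m r)) = n"
    unfolding r by simp
qed

lemma Lab_intro:
  "x = [] \<or> last x = B \<Longrightarrow> 1 \<le> n \<Longrightarrow> m \<le> n \<Longrightarrow> x @ replicate n A @ replicate m B \<in> Lab"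
  unfolding Lab_def by blast

lemma LabE:
  assumes "w \<in> Lab" "w \<noteq> []"
  obtains u n m where "w = u @ replicate n A @ replicate m B" "u = [] \<or> last u = B" "1 \<le> n" "m \<le> n"
  using assms unfolding Lab_def by blast

lemma append_A_B_blocks_in_Lab:
  assumes "1 \<le> n" "m \<le> n"
  shows "u @ replicate n A @ replicate m B \<in> Lab"
proof -
  obtain i x where x: "u = x @ replicate i A" "x = [] \<or> last x = B"
    using ends_with_A_block_exists[of u] unfolding ends_with_A_block_def by blast
  then have "u @ replicate n A @ replicate m B = x @ replicate (i + n) A @ replicate m B"
    by (simp add: replicate_add)
  then show ?thesis using Lab_intro[OF x(2), of "i + n" m] assms by (simp only:)
qed

lemma snoc_A_in_Lab: "w @ [A] \<in> Lab"
  using append_A_B_blocks_in_Lab[of 1 0 w] by simp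

lemma ends_with_A_block_append_B_in_Lab_iff:
  assumes "ends_with_A_block n w" "1 \<le> n"
  shows "w @ replicate m B \<in> Lab \<longleftrightarrow> m \<le> n"
proof -
  obtain x where x: "w = x @ replicate n A" "x = [] \<or> last x = B"
    using assms(1) unfolding ends_with_A_block_def by blast
  have "m \<le> n" if "x @ replicate n A @ replicate m B \<in> Lab"
  proof -
    have "x @ replicate n A @ replicate m B \<noteq> []" using assms(2) by simp
    with that obtain u n' m' where u: "x @ replicate n A @ replicate m B = u @ replicate n' A @ replicate m' B"
      "u = [] \<or> last u = B" "1 \<le> n'" "m' \<le> n'"
      by (rule LabE)
    note lengths = A_B_block_lengths[OF x(2) assms(2), of m, unfolded u(1)]
    note lengths' = A_B_block_lengths[OF u(2,3), of m']
    have "m = m'" by (simp only: lengths(1)[symmetric] lengths'(1))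
    moreover have "n = n'" by (simp only: lengths(2)[symmetric] lengths'(2) \<open>m = m'\<close>)
    ultimately show ?thesis using u(4) by simp
  qed
  then show ?thesis using Lab_intro[OF x(2) assms(2)] x(1) by auto
qed

section \<open>A 1-VASS recognising Lab\<close>

text \<open>State 1 reads the prefix u, state 2 counts the last A-block up and state 3 counts the
trailing B-block down; state 0 is only there to accept the empty word.\<close>
definition Lab_vass :: "ab vass" where
  "Lab_vass = \<lparr>states = {0, 1, 2, 3}, init = 0, final = {0, 2, 3},
     delta = {(0, A, [0], 1), (0, B, [0], 1), (1, A, [0], 1), (1, B, [0], 1),
              (0, A, [1], 2), (1, A, [1], 2), (2, A, [1], 2), (2, B, [-1], 3), (3, B, [-1], 3)}\<rparr>"

lemma is_vass_Lab_vass: "is_vass 1 Lab_vass"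
  by (simp add: is_vass_def Lab_vass_def)

lemma Lab_vass_simps [simp]:
  "init Lab_vass = 0" "final Lab_vass = {0, 2, 3}"
  "delta Lab_vass = {(0, A, [0], 1), (0, B, [0], 1), (1, A, [0], 1), (1, B, [0], 1),
     (0, A, [1], 2), (1, A, [1], 2), (2, A, [1], 2), (2, B, [-1], 3), (3, B, [-1], 3)}"
  by (simp_all add: Lab_vass_def)

lemma Lab_vass_run_snoc:
  assumes "is_run 1 Lab_vass w ts" "(p, a, d, q) \<in> delta Lab_vass" "p = last_state Lab_vass ts"
    "0 \<le> total_eff ts 0 + d ! 0"
  shows "is_run 1 Lab_vass (w @ [a]) (ts @ [(p, a, d, q)])"
  using assms unfolding is_run_snoc_vass[OF is_vass_Lab_vass] by simp

lemma Lab_vass_run_guess: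
  "u \<noteq> [] \<Longrightarrow> \<exists>ts. is_run 1 Lab_vass u ts \<and> last_state Lab_vass ts = 1 \<and> total_eff ts 0 = 0"
proof (induction u rule: rev_induct)
  case (snoc a u)
  have "\<exists>ts. is_run 1 Lab_vass u ts \<and> last_state Lab_vass ts \<in> {0, 1} \<and> total_eff ts 0 = 0"
  proof (cases "u = []")
    case True
    then show ?thesis by (intro exI[of _ "[]"]) simp
  qed (use snoc.IH in auto)
  then obtain ts where "is_run 1 Lab_vass u ts" "last_state Lab_vass ts \<in> {0, 1}" "total_eff ts 0 = 0"
    by blast
  then have "is_run 1 Lab_vass (u @ [a]) (ts @ [(last_state Lab_vass ts, a, [0], 1)])"
    by (intro Lab_vass_run_snoc) (cases a; auto)+
  then show ?case using \<open>total_eff ts 0 = 0\<close> by fastforce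
qed simp

lemma Lab_vass_run_A_block:
  "1 \<le> n \<Longrightarrow> \<exists>ts. is_run 1 Lab_vass (u @ replicate n A) ts \<and> last_state Lab_vass ts = 2
     \<and> total_eff ts 0 = int n"
proof (induction n)
  case (Suc n)
  have "\<exists>ts. is_run 1 Lab_vass (u @ replicate n A) ts \<and> last_state Lab_vass ts \<in> {0, 1, 2}
      \<and> total_eff ts 0 = int n"
  proof (cases "n = 0")
    case True
    then show ?thesis
      using Lab_vass_run_guess[of u] by (cases "u = []") (auto intro: exI[of _ "[]"])
  qed (use Suc.IH in auto)
  then obtain ts where "is_run 1 Lab_vass (u @ replicate n A) ts" "last_state Lab_vass ts \<in> {0, 1, 2}"
    "total_eff ts 0 = int n"
    by blast
  then have "is_run 1 Lab_vass (u @ replicate n A @ [A]) (ts @ [(last_state Lab_vass ts, A, [1], 2)])"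
    using Lab_vass_run_snoc[of "u @ replicate n A"] by auto
  then show ?case using \<open>total_eff ts 0 = int n\<close> by (fastforce simp: replicate_append_same)
qed simp

lemma Lab_vass_run_B_block:
  assumes "1 \<le> n" "m \<le> n"
  shows "\<exists>ts. is_run 1 Lab_vass (u @ replicate n A @ replicate m B) ts
    \<and> last_state Lab_vass ts = (if m = 0 then 2 else 3) \<and> total_eff ts 0 = int n - int m"
  using assms(2)
proof (induction m)
  case 0
  then show ?case using Lab_vass_run_A_block[OF assms(1)] by simp
next
  case (Suc m)
  then obtain ts where "is_run 1 Lab_vass (u @ replicate n A @ replicate m B) ts"
    "last_state Lab_vass ts \<in> {2, 3}" "total_eff ts 0 = int n - int m"
    by (auto split: if_splits)
  then have "is_run 1 Lab_vass ((u @ replicate n A @ replicate m B) @ [B])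
      (ts @ [(last_state Lab_vass ts, B, [-1], 3)])"
    using Suc.prems by (intro Lab_vass_run_snoc) auto
  then show ?case using \<open>total_eff ts 0 = int n - int m\<close> by (fastforce simp: replicate_append_same)
qed

lemma Lab_subset_lang_Lab_vass: "Lab \<subseteq> lang 1 Lab_vass"
proof
  fix w assume "w \<in> Lab"
  show "w \<in> lang 1 Lab_vass"
  proof (cases "w = []")
    case True
    then show ?thesis by (auto simp: lang_def accepting_run_def intro: exI[of _ "[]"])
  next
    case False
    then obtain u n m where "w = u @ replicate n A @ replicate m B" "1 \<le> n" "m \<le> n"
      using \<open>w \<in> Lab\<close> by (blast elim: LabE)
    moreover obtain ts where "is_run 1 Lab_vass (u @ replicate n A @ replicate m B) ts"
      "last_state Lab_vass ts = (if m = 0 then 2 else 3)"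
      using Lab_vass_run_B_block calculation(2,3) by blast
    ultimately show ?thesis unfolding lang_def accepting_run_def
      by (intro CollectI exI[of _ ts]) simp
  qed
qed

definition Lab_vass_inv :: "ab list \<Rightarrow> nat \<Rightarrow> int \<Rightarrow> bool" where
  "Lab_vass_inv w q c \<longleftrightarrow> (q = 0 \<longrightarrow> w = []) \<and> (q \<in> {0, 1} \<longrightarrow> c = 0)
     \<and> (q \<in> {2, 3} \<longrightarrow> (\<exists>u n m. w = u @ replicate n A @ replicate m B \<and> 1 \<le> n
           \<and> c = int n - int m \<and> (q = 2 \<longrightarrow> m = 0)))"

lemma Lab_vass_inv_blockI:
  "w = u @ replicate n A @ replicate m B \<Longrightarrow> 1 \<le> n \<Longrightarrow> c = int n - int m \<Longrightarrow> q \<in> {2, 3}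
    \<Longrightarrow> (q = 2 \<Longrightarrow> m = 0) \<Longrightarrow> Lab_vass_inv w q c"
  unfolding Lab_vass_inv_def by auto

lemma Lab_vass_inv_step:
  assumes inv: "Lab_vass_inv w q c" and t: "(q, a, d, q') \<in> delta Lab_vass"
  shows "Lab_vass_inv (w @ [a]) q' (c + d ! 0)"
proof -
  consider (guess) "q' = 1" "d = [0]" "q \<in> {0, 1}"
    | (first_A) "q \<in> {0, 1}" "a = A" "d = [1]" "q' = 2"
    | (next_A) "q = 2" "a = A" "d = [1]" "q' = 2"
    | (first_B) "q = 2" "a = B" "d = [-1]" "q' = 3"
    | (next_B) "q = 3" "a = B" "d = [-1]" "q' = 3"
    using t by auto
  then show ?thesis
  proof cases
    case guess
    then show ?thesis using inv by (auto simp: Lab_vass_inv_def)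
  next
    case first_A
    then show ?thesis
      using inv by (intro Lab_vass_inv_blockI[of _ w 1 0]) (auto simp: Lab_vass_inv_def)
  next
    case next_A
    then obtain u n where "w = u @ replicate n A" "1 \<le> n" "c = int n"
      using inv by (auto simp: Lab_vass_inv_def)
    then show ?thesis
      using next_A by (intro Lab_vass_inv_blockI[of _ u "Suc n" 0]) (auto simp: replicate_append_same)
  next
    case first_B
    then obtain u n where "w = u @ replicate n A" "1 \<le> n" "c = int n"
      using inv by (auto simp: Lab_vass_inv_def)
    then show ?thesis
      using first_B by (intro Lab_vass_inv_blockI[of _ u n 1]) auto
  next
    case next_B
    then obtain u n m where "w = u @ replicate n A @ replicate m B" "1 \<le> n" "c = int n - int m"
      using inv by (auto simp: Lab_vass_inv_def)
    then show ?thesis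
      using next_B by (intro Lab_vass_inv_blockI[of _ u n "Suc m"]) (auto simp: replicate_append_same)
  qed
qed

lemma Lab_vass_run_inv:
  "is_run 1 Lab_vass w ts \<Longrightarrow> Lab_vass_inv w (last_state Lab_vass ts) (total_eff ts 0)"
proof (induction w arbitrary: ts rule: rev_induct)
  case Nil
  then show ?case using is_run_length[OF Nil] by (simp add: Lab_vass_inv_def)
next
  case (snoc a w)
  then obtain ts' t where ts: "ts = ts' @ [t]"
    using is_run_length[OF snoc.prems] by (cases ts rule: rev_cases) auto
  have run: "is_run 1 Lab_vass w ts'" "t \<in> delta Lab_vass" "lbl t = a" "src t = last_state Lab_vass ts'"
    using snoc.prems unfolding ts is_run_snoc by auto
  then have "(last_state Lab_vass ts', a, eff t, tgt t) \<in> delta Lab_vass"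
    by (cases t) simp
  then show ?case
    using Lab_vass_inv_step snoc.IH[OF run(1)] unfolding ts by simp
qed

lemma lang_Lab_vass_subset_Lab: "lang 1 Lab_vass \<subseteq> Lab"
proof
  fix w assume "w \<in> lang 1 Lab_vass"
  then obtain ts where run: "is_run 1 Lab_vass w ts" and "last_state Lab_vass ts \<in> {0, 2, 3}"
    unfolding lang_def accepting_run_def by auto
  moreover have "0 \<le> total_eff ts 0"
    using run_total_eff_nonneg[OF is_vass_Lab_vass run] by simp
  ultimately consider "w = []"
    | u n m where "w = u @ replicate n A @ replicate m B" "1 \<le> n" "m \<le> n"
    using Lab_vass_run_inv[OF run] unfolding Lab_vass_inv_def by fastforce
  then show "w \<in> Lab"
  proof cases
    case 1
    then show ?thesis by (simp add: Lab_def)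
  next
    case 2
    then show ?thesis using append_A_B_blocks_in_Lab by simp
  qed
qed

lemma lang_Lab_vass: "lang 1 Lab_vass = Lab"
  using lang_Lab_vass_subset_Lab Lab_subset_lang_Lab_vass by blast

section \<open>Thinning out integer sequences\<close>

lemma infinite_records:
  fixes s :: "nat \<Rightarrow> int"
  assumes "\<not> bdd_above (s ` M)"
  shows "infinite {m \<in> M. \<forall>m' \<in> M. m' < m \<longrightarrow> s m' < s m}"
  unfolding infinite_nat_iff_unbounded
proof
  fix n
  define V where "V = (\<Sum>m' \<in> M \<inter> {..n}. \<bar>s m'\<bar>)"
  have below_V: "s m' \<le> V" if "m' \<in> M" "m' \<le> n" for m'
  proof -
    have "\<bar>s m'\<bar> \<le> V" unfolding V_def by (rule member_le_sum) (use that in auto)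
    then show ?thesis by linarith
  qed
  obtain m where m: "m \<in> M" "V < s m"
    using assms by (auto simp: bdd_above_def not_le)
  define m0 where "m0 = (LEAST m. m \<in> M \<and> V < s m)"
  have m0: "m0 \<in> M" "V < s m0"
    using LeastI[of "\<lambda>m. m \<in> M \<and> V < s m", OF conjI[OF m]] unfolding m0_def by auto
  have "s m' < s m0" if "m' \<in> M" "m' < m0" for m'
    using not_less_Least[of m' "\<lambda>m. m \<in> M \<and> V < s m"] that m0(2) unfolding m0_def by auto
  then have "m0 \<in> {m \<in> M. \<forall>m' \<in> M. m' < m \<longrightarrow> s m' < s m}"
    using m0(1) by blast
  moreover have "n < m0"
  proof (rule ccontr)
    assume "\<not> n < m0"
    then have "s m0 \<le> V" using below_V[OF m0(1)] by simp
    then show False using m0(2) by simp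
  qed
  ultimately show "\<exists>m > n. m \<in> {m \<in> M. \<forall>m' \<in> M. m' < m \<longrightarrow> s m' < s m}"
    by (intro exI[of _ m0] conjI)
qed

lemma infinite_subset_const_or_unbounded:
  fixes s :: "nat \<Rightarrow> int"
  assumes "infinite M" "\<forall>m \<in> M. 0 \<le> s m"
  obtains (const) M' where "M' \<subseteq> M" "infinite M'" "\<exists>v. \<forall>m \<in> M'. s m = v"
  | (unbounded) M' where "M' \<subseteq> M" "infinite M'" "\<forall>N. finite {m \<in> M'. s m < N}"
proof (cases "bdd_above (s ` M)")
  case True
  then obtain b where "\<forall>m \<in> M. s m \<le> b" by (auto simp: bdd_above_def)
  then have "s ` M \<subseteq> {0..b}" using assms(2) by auto
  then have "finite (s ` M)" using finite_subset by blast
  then obtain m0 where "m0 \<in> M" "infinite {m \<in> M. s m = s m0}"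
    using pigeonhole_infinite[OF assms(1)] by blast
  then show thesis using const[of "{m \<in> M. s m = s m0}"] by blast
next
  case False
  define R where "R = {m \<in> M. \<forall>m' \<in> M. m' < m \<longrightarrow> s m' < s m}"
  have "\<forall>N. finite {m \<in> R. s m < N}"
  proof
    fix N
    have "strict_mono_on R s" by (auto simp: R_def strict_mono_on_def)
    then have inj: "inj_on s {m \<in> R. s m < N}"
      by (rule strict_mono_on_imp_inj_on[THEN inj_on_subset]) auto
    have "s ` {m \<in> R. s m < N} \<subseteq> {0..N}" using assms(2) by (auto simp: R_def)
    then have "finite (s ` {m \<in> R. s m < N})" by (rule finite_subset) simp
    then show "finite {m \<in> R. s m < N}" by (rule finite_imageD[OF _ inj])
  qed
  moreover have "infinite R" unfolding R_def by (rule infinite_records[OF False])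
  moreover have "R \<subseteq> M" unfolding R_def by blast
  ultimately show thesis using unbounded[of R] by simp
qed

lemma infinite_subset_coordinatewise_const_or_unbounded:
  fixes s :: "nat \<Rightarrow> 'i \<Rightarrow> int"
  assumes "finite I" "infinite M" "\<forall>m \<in> M. \<forall>i \<in> I. 0 \<le> s m i"
  shows "\<exists>M' J. M' \<subseteq> M \<and> infinite M' \<and> J \<subseteq> I
    \<and> (\<forall>i \<in> I - J. \<exists>v. \<forall>m \<in> M'. s m i = v) \<and> (\<forall>i \<in> J. \<forall>N. finite {m \<in> M'. s m i < N})"
  using assms
proof (induction I arbitrary: M rule: finite_induct)
  case empty
  then show ?case by (intro exI[of _ M] exI[of _ "{}"]) simp
next
  case (insert i I)
  have "infinite M" "\<forall>m \<in> M. \<forall>i \<in> I. 0 \<le> s m i" using insert.prems by auto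
  from insert.IH[OF this] obtain M1 J where M1: "M1 \<subseteq> M" "infinite M1" "J \<subseteq> I"
    "\<forall>i \<in> I - J. \<exists>v. \<forall>m \<in> M1. s m i = v" "\<forall>i \<in> J. \<forall>N. finite {m \<in> M1. s m i < N}"
    by blast
  have unbounded_J: "finite {m \<in> M2. s m j < N}" if "M2 \<subseteq> M1" "j \<in> J" for M2 j N
    by (rule finite_subset[OF _ M1(5)[rule_format, OF that(2)]]) (use that(1) in blast)
  have const_I: "\<exists>v. \<forall>m \<in> M2. s m j = v" if "M2 \<subseteq> M1" "j \<in> I - J" for M2 j
    using M1(4) that by blast
  have "\<forall>m \<in> M1. 0 \<le> s m i" using M1(1) insert.prems(2) by blast
  then show ?case
  proof (rule infinite_subset_const_or_unbounded[OF M1(2)])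
    fix M2 assume const: "M2 \<subseteq> M1" "infinite M2" "\<exists>v. \<forall>m \<in> M2. s m i = v"
    have "\<forall>j \<in> insert i I - J. \<exists>v. \<forall>m \<in> M2. s m j = v"
      using const const_I by blast
    moreover have "\<forall>j \<in> J. \<forall>N. finite {m \<in> M2. s m j < N}"
      using unbounded_J const(1) by blast
    ultimately show ?thesis
      using const(1,2) M1(1,3) by (intro exI[of _ M2] exI[of _ J]) blast
  next
    fix M2 assume unbounded: "M2 \<subseteq> M1" "infinite M2" "\<forall>N. finite {m \<in> M2. s m i < N}"
    have "\<forall>j \<in> insert i I - insert i J. \<exists>v. \<forall>m \<in> M2. s m j = v"
      using unbounded const_I by blast
    moreover have "\<forall>j \<in> insert i J. \<forall>N. finite {m \<in> M2. s m j < N}"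
      using unbounded_J unbounded(1,3) by blast
    ultimately show ?thesis
      using unbounded(1,2) M1(1,3) by (intro exI[of _ M2] exI[of _ "insert i J"]) blast
  qed
qed

lemma pigeonhole_unbounded:
  fixes P :: "int \<Rightarrow> 'a \<Rightarrow> bool"
  assumes "finite S" "\<And>N. \<exists>x. P N x \<and> g x \<in> S"
    and antimono: "\<And>N N' x. N \<le> N' \<Longrightarrow> P N' x \<Longrightarrow> P N x"
  shows "\<exists>\<sigma>. \<forall>N. \<exists>x. P N x \<and> g x = \<sigma>"
proof (rule ccontr)
  assume "\<nexists>\<sigma>. \<forall>N. \<exists>x. P N x \<and> g x = \<sigma>"
  then obtain Nf where Nf: "\<And>\<sigma> x. P (Nf \<sigma>) x \<Longrightarrow> g x \<noteq> \<sigma>" by metis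
  obtain x where x: "P (\<Sum>\<sigma>\<in>S. \<bar>Nf \<sigma>\<bar>) x" "g x \<in> S" using assms(2) by blast
  have "Nf (g x) \<le> (\<Sum>\<sigma>\<in>S. \<bar>Nf \<sigma>\<bar>)"
    using member_le_sum[of "g x" S "\<lambda>\<sigma>. \<bar>Nf \<sigma>\<bar>"] x(2) assms(1) by fastforce
  then have "P (Nf (g x)) x" using antimono x(1) by blast
  then show False using Nf by blast
qed

lemma exists_jointly_large:
  fixes f :: "nat \<Rightarrow> 'i \<Rightarrow> int"
  assumes "infinite M" "finite J" "\<forall>i \<in> J. \<forall>N. finite {n \<in> M. f n i < N}"
  shows "\<exists>n \<in> M. \<forall>i \<in> J. N \<le> f n i"
proof -
  have "finite (\<Union>i \<in> J. {n \<in> M. f n i < N})" using assms(2,3) by blast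
  then have "infinite (M - (\<Union>i \<in> J. {n \<in> M. f n i < N}))"
    using assms(1) by (rule Diff_infinite_finite)
  then obtain n where "n \<in> M - (\<Union>i \<in> J. {n \<in> M. f n i < N})"
    using infinite_imp_nonempty by blast
  then show ?thesis by (intro bexI[of _ n]) (auto simp: not_less)
qed

section \<open>No history-deterministic VASS recognises Lab\<close>

text \<open>What a resolver for a VASS recognising Lab provides: st w and cv w are the state and
the counters it reaches on the word w.\<close>
locale Lab_resolution =
  fixes k :: nat and st :: "ab list \<Rightarrow> nat" and cv :: "ab list \<Rightarrow> nat \<Rightarrow> int"
    and Q :: "nat set" and D :: int
  assumes finite_Q: "finite Q" and st_in_Q: "st w \<in> Q"
    and cv_nonneg: "i < k \<Longrightarrow> 0 \<le> cv w i"
    and cv_lipschitz: "i < k \<Longrightarrow> \<bar>cv (w @ u) i - cv w i\<bar> \<le> D * int (length u)"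
    and Lab_transfer: "st w = st w' \<Longrightarrow> \<forall>i < k. cv w i \<le> cv w' i \<Longrightarrow> w @ u \<in> Lab \<Longrightarrow> w' @ u \<in> Lab"
begin

lemma not_dominated_by_shorter_block:
  assumes "ends_with_A_block n w" "ends_with_A_block n' w'" "1 \<le> n'" "n' < n" "st w = st w'"
  shows "\<not> (\<forall>i < k. cv w i \<le> cv w' i)"
proof
  assume "\<forall>i < k. cv w i \<le> cv w' i"
  moreover have "w @ replicate n B \<in> Lab"
    using ends_with_A_block_append_B_in_Lab_iff[OF assms(1)] assms(3,4) by simp
  ultimately have "w' @ replicate n B \<in> Lab" using Lab_transfer assms(5) by blast
  then show False
    using ends_with_A_block_append_B_in_Lab_iff[OF assms(2,3)] assms(4) by simp
qed

lemma extend_to_A_block: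
  "\<exists>w'. ends_with_A_block n w' \<and> (\<forall>i < k. \<bar>cv w' i - cv w i\<bar> \<le> D * int (Suc n))"
proof (intro exI conjI)
  show "ends_with_A_block n (w @ B # replicate n A)" by (rule ends_with_A_block_extend)
  show "\<forall>i < k. \<bar>cv (w @ B # replicate n A) i - cv w i\<bar> \<le> D * int (Suc n)"
    using cv_lipschitz[of _ w "B # replicate n A"] by simp
qed

definition pumpable_at :: "nat set \<Rightarrow> nat \<Rightarrow> (nat \<Rightarrow> int) \<Rightarrow> nat \<Rightarrow> bool" where
  "pumpable_at \<Omega> q f n \<longleftrightarrow> (\<forall>N. \<exists>w. ends_with_A_block n w \<and> st w = q
      \<and> (\<forall>i \<in> \<Omega>. N \<le> cv w i) \<and> (\<forall>i < k. i \<notin> \<Omega> \<longrightarrow> cv w i = f i))"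

definition pumpable :: "nat set \<Rightarrow> bool" where
  "pumpable \<Omega> \<longleftrightarrow> (\<forall>n \<ge> 1. \<exists>q f. pumpable_at \<Omega> q f n)"

lemma pumpable_empty: "pumpable {}"
  unfolding pumpable_def pumpable_at_def using ends_with_A_block_replicate by blast

lemma pumpable_at_cong:
  "\<forall>i < k. i \<notin> \<Omega> \<longrightarrow> f i = g i \<Longrightarrow> pumpable_at \<Omega> q f n \<longleftrightarrow> pumpable_at \<Omega> q g n"
  unfolding pumpable_at_def by metis

text \<open>A witness for n' chosen large on \<Omega> dominates any witness for n.\<close>
lemma pumpable_at_block_unique:
  assumes "pumpable_at \<Omega> q f n" "pumpable_at \<Omega> q f n'" "1 \<le> n'" "n' < n"
  shows False
proof -
  obtain w where w: "ends_with_A_block n w" "st w = q" "\<forall>i < k. i \<notin> \<Omega> \<longrightarrow> cv w i = f i"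
    using assms(1) unfolding pumpable_at_def by blast
  obtain w' where w': "ends_with_A_block n' w'" "st w' = q"
    "\<forall>i \<in> \<Omega>. (\<Sum>j<k. cv w j) \<le> cv w' i" "\<forall>i < k. i \<notin> \<Omega> \<longrightarrow> cv w' i = f i"
    using assms(2) unfolding pumpable_at_def by blast
  have "cv w i \<le> (\<Sum>j<k. cv w j)" if "i < k" for i
    using member_le_sum[of i "{..<k}" "cv w"] cv_nonneg that by simp
  then have "\<forall>i < k. cv w i \<le> cv w' i"
    using w(3) w'(3,4) by (metis order_trans order_refl)
  then show False
    using not_dominated_by_shorter_block[OF w(1) w'(1) assms(3,4)] w(2) w'(2) by simp
qed

lemma pumpable_at_of_bounded:
  assumes "\<forall>N. \<exists>w. ends_with_A_block n w \<and> (\<forall>i \<in> \<Omega>. N \<le> cv w i)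
      \<and> (\<forall>i < k. i \<notin> \<Omega> \<longrightarrow> \<bar>cv w i\<bar> \<le> b)"
  shows "\<exists>q f. pumpable_at \<Omega> q f n"
proof -
  define I where "I = {..<k} - \<Omega>"
  define P where "P N w \<longleftrightarrow> ends_with_A_block n w \<and> (\<forall>i \<in> \<Omega>. N \<le> cv w i)" for N w
  define g where "g w = (st w, restrict (cv w) I)" for w
  have "finite (Q \<times> (I \<rightarrow>\<^sub>E {-b..b}))"
    using finite_Q by (simp add: finite_PiE I_def)
  moreover have "\<exists>w. P N w \<and> g w \<in> Q \<times> (I \<rightarrow>\<^sub>E {-b..b})" for N
  proof -
    obtain w where "P N w" "\<forall>i < k. i \<notin> \<Omega> \<longrightarrow> \<bar>cv w i\<bar> \<le> b"
      using assms unfolding P_def by blast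
    then show ?thesis
      using st_in_Q by (intro exI[of _ w]) (auto simp: g_def I_def restrict_PiE_iff abs_le_iff)
  qed
  moreover have "P N w" if "N \<le> N'" "P N' w" for N N' w
    using that unfolding P_def by force
  ultimately obtain \<sigma> where \<sigma>: "\<forall>N. \<exists>w. P N w \<and> g w = \<sigma>"
    using pigeonhole_unbounded[of _ P g] by blast
  have "pumpable_at \<Omega> (fst \<sigma>) (snd \<sigma>) n"
    unfolding pumpable_at_def
  proof
    fix N
    obtain w where "P N w" "g w = \<sigma>" using \<sigma> by blast
    then show "\<exists>w. ends_with_A_block n w \<and> st w = fst \<sigma> \<and> (\<forall>i \<in> \<Omega>. N \<le> cv w i)
        \<and> (\<forall>i < k. i \<notin> \<Omega> \<longrightarrow> cv w i = snd \<sigma> i)"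
      unfolding P_def g_def I_def by auto
  qed
  then show ?thesis by blast
qed

lemma pumpable_refine:
  assumes "pumpable \<Omega>"
  obtains M q f J where "infinite M" "\<forall>n \<in> M. 1 \<le> n \<and> pumpable_at \<Omega> q (f n) n"
    "J \<subseteq> {..<k} - \<Omega>" "\<forall>i \<in> {..<k} - \<Omega> - J. \<exists>v. \<forall>n \<in> M. f n i = v"
    "\<forall>i \<in> J. \<forall>N. finite {n \<in> M. f n i < N}"
proof -
  have "\<forall>n. \<exists>p. 1 \<le> n \<longrightarrow> pumpable_at \<Omega> (fst p) (snd p) n"
    using assms unfolding pumpable_def by simp
  then obtain p where p: "\<forall>n. 1 \<le> n \<longrightarrow> pumpable_at \<Omega> (fst (p n)) (snd (p n)) n"
    by (metis choice)
  define q where "q n = fst (p n)" for n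
  define f where "f n = snd (p n)" for n
  have qf: "pumpable_at \<Omega> (q n) (f n) n" if "1 \<le> n" for n
    using p that unfolding q_def f_def by blast
  have "q n \<in> Q" if "1 \<le> n" for n
    using qf[OF that] st_in_Q unfolding pumpable_at_def by metis
  then have "finite (q ` {1..})" using finite_Q by (meson finite_subset image_subsetI atLeast_iff)
  then obtain n0 where n0: "infinite {n \<in> {1..}. q n = q n0}"
    using pigeonhole_infinite[of "{1::nat..}" q] infinite_Ici by blast
  define M0 where "M0 = {n \<in> {1..}. q n = q n0}"
  have "0 \<le> f n i" if n: "n \<in> M0" and i: "i \<in> {..<k} - \<Omega>" for n i
  proof -
    obtain w where "\<forall>i < k. i \<notin> \<Omega> \<longrightarrow> cv w i = f n i"
      using qf[of n] n unfolding pumpable_at_def M0_def by auto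
    then show ?thesis using cv_nonneg[of i w] i by simp
  qed
  then obtain M J where "M \<subseteq> M0" "infinite M" "J \<subseteq> {..<k} - \<Omega>"
    "\<forall>i \<in> {..<k} - \<Omega> - J. \<exists>v. \<forall>n \<in> M. f n i = v" "\<forall>i \<in> J. \<forall>N. finite {n \<in> M. f n i < N}"
    using infinite_subset_coordinatewise_const_or_unbounded[of "{..<k} - \<Omega>" M0 f] n0
    unfolding M0_def by blast
  moreover have "\<forall>n \<in> M. 1 \<le> n \<and> pumpable_at \<Omega> (q n0) (f n) n"
    using qf \<open>M \<subseteq> M0\<close> unfolding M0_def by fastforce
  ultimately show thesis using that by blast
qed

lemma pumpable_at_extend:
  assumes "pumpable_at \<Omega> q f n" "\<Omega> \<subseteq> {..<k}"
  obtains w' where "ends_with_A_block n' w'" "\<forall>i \<in> \<Omega>. N \<le> cv w' i"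
    "\<forall>i < k. i \<notin> \<Omega> \<longrightarrow> \<bar>cv w' i - f i\<bar> \<le> D * int (Suc n')"
proof -
  obtain w where w: "\<forall>i \<in> \<Omega>. N + D * int (Suc n') \<le> cv w i" "\<forall>i < k. i \<notin> \<Omega> \<longrightarrow> cv w i = f i"
    using assms(1) unfolding pumpable_at_def by blast
  obtain w' where w': "ends_with_A_block n' w'" "\<forall>i < k. \<bar>cv w' i - cv w i\<bar> \<le> D * int (Suc n')"
    using extend_to_A_block by blast
  have "N \<le> cv w' i" if "i \<in> \<Omega>" for i
    using w(1) w'(2) that assms(2) by (fastforce simp: abs_le_iff)
  then show thesis using that w' w(2) by fastforce
qed

lemma pumpable_union:
  assumes "\<Omega> \<subseteq> {..<k}" "infinite M" "\<forall>n \<in> M. 1 \<le> n \<and> pumpable_at \<Omega> q (f n) n"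
    "J \<subseteq> {..<k} - \<Omega>" "\<forall>i \<in> {..<k} - \<Omega> - J. \<exists>v. \<forall>n \<in> M. f n i = v"
    "\<forall>i \<in> J. \<forall>N. finite {n \<in> M. f n i < N}"
  shows "pumpable (\<Omega> \<union> J)"
  unfolding pumpable_def
proof (intro allI impI)
  fix n' :: nat
  obtain n0 where "n0 \<in> M" using assms(2) infinite_imp_nonempty by blast
  define C where "C = D * int (Suc n')"
  have "\<exists>w. ends_with_A_block n' w \<and> (\<forall>i \<in> \<Omega> \<union> J. N \<le> cv w i)
      \<and> (\<forall>i < k. i \<notin> \<Omega> \<union> J \<longrightarrow> \<bar>cv w i\<bar> \<le> (\<Sum>j<k. \<bar>f n0 j\<bar>) + C)" for N
  proof -
    have "finite J" using assms(4) finite_subset by blast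
    then obtain n where n: "n \<in> M" "\<forall>i \<in> J. N + C \<le> f n i"
      using exists_jointly_large[OF assms(2) _ assms(6)] by blast
    then obtain w where w: "ends_with_A_block n' w" "\<forall>i \<in> \<Omega>. N \<le> cv w i"
      "\<forall>i < k. i \<notin> \<Omega> \<longrightarrow> \<bar>cv w i - f n i\<bar> \<le> C"
      using pumpable_at_extend assms(1,3) unfolding C_def by metis
    have "N \<le> cv w i" if "i \<in> J" for i
      using w(3) n(2) that assms(4) by (fastforce simp: abs_le_iff)
    moreover have "\<bar>cv w i\<bar> \<le> (\<Sum>j<k. \<bar>f n0 j\<bar>) + C" if "i < k" "i \<notin> \<Omega> \<union> J" for i
    proof -
      have "i \<in> {..<k} - \<Omega> - J" using that by simp
      then have "f n i = f n0 i" using assms(5) n(1) \<open>n0 \<in> M\<close> by metis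
      moreover have "\<bar>f n0 i\<bar> \<le> (\<Sum>j<k. \<bar>f n0 j\<bar>)"
        using member_le_sum[of i "{..<k}" "\<lambda>j. \<bar>f n0 j\<bar>"] that(1) by simp
      moreover have "\<bar>cv w i - f n i\<bar> \<le> C" using w(3) that by blast
      ultimately show ?thesis by linarith
    qed
    ultimately show ?thesis using w(1,2) by blast
  qed
  then show "\<exists>q f. pumpable_at (\<Omega> \<union> J) q f n'" by (intro pumpable_at_of_bounded) blast
qed

lemma pumpable_grows:
  assumes "\<Omega> \<subseteq> {..<k}" "pumpable \<Omega>"
  obtains \<Omega>' where "\<Omega> \<subset> \<Omega>'" "\<Omega>' \<subseteq> {..<k}" "pumpable \<Omega>'"
proof -
  obtain M q f J where M: "infinite M" "\<forall>n \<in> M. 1 \<le> n \<and> pumpable_at \<Omega> q (f n) n"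
    "J \<subseteq> {..<k} - \<Omega>" "\<forall>i \<in> {..<k} - \<Omega> - J. \<exists>v. \<forall>n \<in> M. f n i = v"
    "\<forall>i \<in> J. \<forall>N. finite {n \<in> M. f n i < N}"
    using pumpable_refine[OF assms(2)] by blast
  have "J \<noteq> {}"
  proof
    assume "J = {}"
    obtain n' where "n' \<in> M" using M(1) infinite_imp_nonempty by blast
    moreover obtain n where "n \<in> M" "n' < n"
      using M(1)[unfolded infinite_nat_iff_unbounded, rule_format, of n'] by blast
    have "f n' i = f n i" if "i < k" "i \<notin> \<Omega>" for i
    proof -
      have "i \<in> {..<k} - \<Omega> - J" using that \<open>J = {}\<close> by simp
      then obtain v where "\<forall>m \<in> M. f m i = v" using M(4) by blast
      then show ?thesis using \<open>n \<in> M\<close> \<open>n' \<in> M\<close> by simp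
    qed
    then have "pumpable_at \<Omega> q (f n') n"
      using pumpable_at_cong[of \<Omega> "f n'" "f n"] M(2) \<open>n \<in> M\<close> by simp
    then show False
      using pumpable_at_block_unique M(2) \<open>n' \<in> M\<close> \<open>n' < n\<close> by blast
  qed
  then show thesis
    using that[of "\<Omega> \<union> J"] pumpable_union[OF assms(1) M] M(3) assms(1) by blast
qed

lemma contradiction: False
proof -
  have "\<exists>\<Omega> \<subseteq> {..<k}. n \<le> card \<Omega> \<and> pumpable \<Omega>" for n
  proof (induction n)
    case 0
    show ?case using pumpable_empty by blast
  next
    case (Suc n)
    then obtain \<Omega> where "\<Omega> \<subseteq> {..<k}" "n \<le> card \<Omega>" "pumpable \<Omega>" by blast
    moreover obtain \<Omega>' where "\<Omega> \<subset> \<Omega>'" "\<Omega>' \<subseteq> {..<k}" "pumpable \<Omega>'"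
      using pumpable_grows calculation(1,3) by blast
    moreover have "card \<Omega> < card \<Omega>'"
      using psubset_card_mono finite_subset calculation(4,5) by blast
    ultimately show ?case by (intro exI[of _ \<Omega>']) auto
  qed
  then obtain \<Omega> where "\<Omega> \<subseteq> {..<k}" "Suc k \<le> card \<Omega>" by blast
  then show False using card_mono[of "{..<k}" \<Omega>] by simp
qed

end

lemma Lab_resolution_of_resolver:
  assumes V: "is_vass k V" "lang k V = Lab" and r: "is_resolver k V r"
  shows "Lab_resolution k (\<lambda>w. last_state V (resolve r [] w)) (\<lambda>w. total_eff (resolve r [] w))
    (states V) (eff_bound k V)"
proof
  have run: "is_run k V w (resolve r [] w)" for w
    using resolver_run[OF r] snoc_A_in_Lab V(2) by blast
  show "finite (states V)" using V(1) by (simp add: is_vass_def)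
  show "last_state V (resolve r [] w) \<in> states V" for w
    using last_state_in_states[OF V(1) set_run_subset_delta[OF run]] .
  show "0 \<le> total_eff (resolve r [] w) i" if "i < k" for w i
    using run_total_eff_nonneg[OF V(1) run that] .
  show "\<bar>total_eff (resolve r [] (w @ u)) i - total_eff (resolve r [] w) i\<bar>
      \<le> eff_bound k V * int (length u)" if "i < k" for w u i
    using total_eff_resolve_append_le[OF V(1) _ that] r by (simp add: is_resolver_def)
  show "w' @ u \<in> Lab"
    if "last_state V (resolve r [] w) = last_state V (resolve r [] w')"
      "\<forall>i < k. total_eff (resolve r [] w) i \<le> total_eff (resolve r [] w') i" "w @ u \<in> Lab"
    for w w' u
    using resolver_lang_transfer[OF V(1) r run that(1,2)] that(3) V(2) by simp
qed

lemma Lab_not_in_CH: "Lab \<notin> CH"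
proof
  assume "Lab \<in> CH"
  then obtain k V r where "is_vass k V" "lang k V = Lab" "is_resolver k V r"
    unfolding CH_def CH_k_def history_deterministic_def by blast
  then interpret Lab_resolution k "\<lambda>w. last_state V (resolve r [] w)"
    "\<lambda>w. total_eff (resolve r [] w)" "states V" "eff_bound k V"
    by (rule Lab_resolution_of_resolver)
  show False by (rule contradiction)
qed

theorem mainTheorem4:
  shows "Lab \<in> CN 1 \<and> Lab \<notin> CH"
  using is_vass_Lab_vass lang_Lab_vass Lab_not_in_CH unfolding CN_def by blast

end
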